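(* Fix widths $\mathbf{n}=(n_0,\dots,n_L)$, piecewise differentiable $h_1,\dots,h_L:\mathbb{R}\to\mathbb{R}$, a finite batch $\{(x_j,y_j)\}\subseteq\mathbb{R}^{n_0}\times\mathbb{R}^{n_L}$ and a cost function $\mathcal C$, and let $\mathcal L,\mathcal L_{\rm red},\iota_1,q_1,\iota_2,q_2,\iota$ be as in the context. Then: (1) $\iota=\iota_1\circ\iota_2$ and $\mathcal L\circ\iota=\mathcal L_{\rm red}$; (2) $\mathcal L\circ\iota_1=\mathcal L_{\rm red}\circ q_2$ on $\mathsf{Param}^{\rm int}(\mathbf{n})$; (3) for every $\mathbf{T}\in\mathsf{Param}^{\rm int}(\mathbf{n})$, $q_1\big(\nabla_{\iota_1(\mathbf{T})}\mathcal L\big)=\iota_2\big(\nabla_{q_2(\mathbf{T})}\mathcal L_{\rm red}\big)$.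
   Context: Merged notation: $\mathsf{Param}(\mathbf{n})=\prod_{i=1}^L\mathbb{R}^{n_i\times(n_{i-1}+1)}$, $\mathbf{A}=(A_i)$. Reduced widths: $n^{\rm red}_0=n_0$, $n^{\rm red}_i=\min(n_i,n^{\rm red}_{i-1}+1)$ for $1\le i\le L-1$, $n^{\rm red}_L=n_L$. For $h:\mathbb{R}\to\mathbb{R}$, $h^{(k)}(v)=h(|v|)v/|v|$ ($v\ne0$), $h^{(k)}(0)=0$. With $\rho_i=h_i^{(n_i)}$, the feedforward function of $\mathbf{A}$ is $F=F_L$, $F_0=\mathrm{id}$, $F_i(x)=\rho_i\big(A_i\,(1,F_{i-1}(x))\big)$, where $(1,v)\in\mathbb{R}^{1+n_{i-1}}$ prepends a 1. $\mathcal L(\mathbf{A})=\sum_j\mathcal C(F(x_j),y_j)$; $\mathcal L_{\rm red}$ on $\mathsf{Param}(\mathbf{n}^{\rm red})$ is defined the same way using $\rho^{\rm red}_i=h_i^{(n^{\rm red}_i)}$. The losses are assumed differentiable so gradients exist. $\mathsf{Param}^{\rm int}(\mathbf{n})$ is the subspace of $\mathbf{T}=(T_i)$ with the bottom-left $(n_i-n^{\rm red}_i)\times(1+n^{\rm red}_{i-1})$ block of each $T_i$ zero. $\iota_1:\mathsf{Param}^{\rm int}(\mathbf{n})\hookrightarrow\mathsf{Param}(\mathbf{n})$ is the inclusion; $q_1:\mathsf{Param}(\mathbf{n})\to\mathsf{Param}^{\rm int}(\mathbf{n})$ zeroes out that block in each $A_i$. $\iota_2:\mathsf{Param}(\mathbf{n}^{\rm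 red})\to\mathsf{Param}^{\rm int}(\mathbf{n})$ pads each $B_i$ with $n_i-n^{\rm red}_i$ zero rows at the bottom and $n_{i-1}-n^{\rm red}_{i-1}$ zero columns at the right, i.e. $B_i\mapsto\begin{bmatrix}B_i&0\\0&0\end{bmatrix}$; $q_2:\mathsf{Param}^{\rm int}(\mathbf{n})\to\mathsf{Param}(\mathbf{n}^{\rm red})$ extracts the top-left $n^{\rm red}_i\times(1+n^{\rm red}_{i-1})$ block of each $T_i$. $\iota:\mathsf{Param}(\mathbf{n}^{\rm red})\hookrightarrow\mathsf{Param}(\mathbf{n})$ places each $B_i$ in the top-left corner of an $n_i\times(1+n_{i-1})$ zero matrix. *)

theory Defs
  imports "HOL-Analysis.Analysis"
begin

text \<open>A parameter A is a function A i r c (layer i in 1..L, row r < n i, column c < n (i-1) + 1),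
column 0 being the bias column; entries outside these ranges are zero.
Vectors of R^k are functions nat \<Rightarrow> real, components r < k.\<close>

type_synonym params = "nat \<Rightarrow> nat \<Rightarrow> nat \<Rightarrow> real"
type_synonym vec = "nat \<Rightarrow> real"

definition Param :: "(nat \<Rightarrow> nat) \<Rightarrow> nat \<Rightarrow> params set" where
  "Param n L = {A. \<forall>i r c. A i r c \<noteq> 0 \<longrightarrow> 1 \<le> i \<and> i \<le> L \<and> r < n i \<and> c < n (i - 1) + 1}"

fun nred :: "(nat \<Rightarrow> nat) \<Rightarrow> nat \<Rightarrow> nat \<Rightarrow> nat" where
  "nred n L 0 = n 0"
| "nred n L (Suc i) = (if Suc i < L then min (n (Suc i)) (nred n L i + 1) else n (Suc i))"

definition vnorm :: "nat \<Rightarrow> vec \<Rightarrow> real" where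
  "vnorm k v = sqrt (\<Sum>r<k. (v r)\<^sup>2)"

definition radial :: "(real \<Rightarrow> real) \<Rightarrow> nat \<Rightarrow> vec \<Rightarrow> vec" where
  "radial h k v = (\<lambda>r. if r < k \<and> vnorm k v \<noteq> 0 then h (vnorm k v) * v r / vnorm k v else 0)"

definition aff :: "(nat \<Rightarrow> nat) \<Rightarrow> params \<Rightarrow> nat \<Rightarrow> vec \<Rightarrow> vec" where
  "aff n A i v = (\<lambda>r. if r < n i then A i r 0 + (\<Sum>c<n (i - 1). A i r (Suc c) * v c) else 0)"

fun ff :: "(nat \<Rightarrow> nat) \<Rightarrow> (nat \<Rightarrow> real \<Rightarrow> real) \<Rightarrow> params \<Rightarrow> vec \<Rightarrow> nat \<Rightarrow> vec" where
  "ff n h A x 0 = (\<lambda>r. if r < n 0 then x r else 0)"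
| "ff n h A x (Suc i) = radial (h (Suc i)) (n (Suc i)) (aff n A (Suc i) (ff n h A x i))"

definition loss :: "(nat \<Rightarrow> nat) \<Rightarrow> nat \<Rightarrow> (nat \<Rightarrow> real \<Rightarrow> real) \<Rightarrow> (vec \<Rightarrow> vec \<Rightarrow> real)
    \<Rightarrow> (vec \<times> vec) list \<Rightarrow> params \<Rightarrow> real" where
  "loss n L h C data A = (\<Sum>(x, y) \<leftarrow> data. C (ff n h A x L) y)"

definition loss_red :: "(nat \<Rightarrow> nat) \<Rightarrow> nat \<Rightarrow> (nat \<Rightarrow> real \<Rightarrow> real) \<Rightarrow> (vec \<Rightarrow> vec \<Rightarrow> real)
    \<Rightarrow> (vec \<times> vec) list \<Rightarrow> params \<Rightarrow> real" where
  "loss_red n L h C data B = loss (nred n L) L h C data B"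

definition in_block :: "(nat \<Rightarrow> nat) \<Rightarrow> nat \<Rightarrow> nat \<Rightarrow> nat \<Rightarrow> nat \<Rightarrow> bool" where
  "in_block n L i r c \<longleftrightarrow> nred n L i \<le> r \<and> c < 1 + nred n L (i - 1)"

definition Param_int :: "(nat \<Rightarrow> nat) \<Rightarrow> nat \<Rightarrow> params set" where
  "Param_int n L = {T \<in> Param n L. \<forall>i r c. in_block n L i r c \<longrightarrow> T i r c = 0}"

definition iota1 :: "params \<Rightarrow> params" where
  "iota1 T = T"

definition q1 :: "(nat \<Rightarrow> nat) \<Rightarrow> nat \<Rightarrow> params \<Rightarrow> params" where
  "q1 n L A = (\<lambda>i r c. if in_block n L i r c then 0 else A i r c)"

definition top_left :: "(nat \<Rightarrow> nat) \<Rightarrow> nat \<Rightarrow> nat \<Rightarrow> nat \<Rightarrow> nat \<Rightarrow> bool" where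
  "top_left n L i r c \<longleftrightarrow> r < nred n L i \<and> c < 1 + nred n L (i - 1)"

definition iota2 :: "(nat \<Rightarrow> nat) \<Rightarrow> nat \<Rightarrow> params \<Rightarrow> params" where
  "iota2 n L B = (\<lambda>i r c. if top_left n L i r c then B i r c else 0)"

definition q2 :: "(nat \<Rightarrow> nat) \<Rightarrow> nat \<Rightarrow> params \<Rightarrow> params" where
  "q2 n L T = (\<lambda>i r c. if top_left n L i r c then T i r c else 0)"

definition iota :: "(nat \<Rightarrow> nat) \<Rightarrow> nat \<Rightarrow> params \<Rightarrow> params" where
  "iota n L B = (\<lambda>i r c. if top_left n L i r c then B i r c else 0)"

definition pinner :: "(nat \<Rightarrow> nat) \<Rightarrow> nat \<Rightarrow> params \<Rightarrow> params \<Rightarrow> real" where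
  "pinner n L G D = (\<Sum>i\<in>{1..L}. \<Sum>r<n i. \<Sum>c<n (i - 1) + 1. G i r c * D i r c)"

definition pnorm :: "(nat \<Rightarrow> nat) \<Rightarrow> nat \<Rightarrow> params \<Rightarrow> real" where
  "pnorm n L D = sqrt (pinner n L D D)"

definition has_pgrad :: "(nat \<Rightarrow> nat) \<Rightarrow> nat \<Rightarrow> (params \<Rightarrow> real) \<Rightarrow> params \<Rightarrow> params \<Rightarrow> bool" where
  "has_pgrad n L f A G \<longleftrightarrow> G \<in> Param n L \<and>
     (\<forall>e>0. \<exists>d>0. \<forall>D\<in>Param n L. pnorm n L D < d \<longrightarrow>
        \<bar>f (\<lambda>i r c. A i r c + D i r c) - f A - pinner n L G D\<bar> \<le> e * pnorm n L D)"

definition pdifferentiable :: "(nat \<Rightarrow> nat) \<Rightarrow> nat \<Rightarrow> (params \<Rightarrow> real) \<Rightarrow> params \<Rightarrow> bool" where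
  "pdifferentiable n L f A \<longleftrightarrow> (\<exists>G. has_pgrad n L f A G)"

definition pgrad :: "(nat \<Rightarrow> nat) \<Rightarrow> nat \<Rightarrow> (params \<Rightarrow> real) \<Rightarrow> params \<Rightarrow> params" where
  "pgrad n L f A = (THE G. has_pgrad n L f A G)"

definition piecewise_diff :: "(real \<Rightarrow> real) \<Rightarrow> bool" where
  "piecewise_diff h \<longleftrightarrow> continuous_on UNIV h \<and> (\<exists>S. finite S \<and> (\<forall>x. x \<notin> S \<longrightarrow> h differentiable (at x)))"

end

theory Submission
  imports Defs
begin

text \<open>On \<open>Param_int\<close> the bottom-left blocks vanish, so by induction over the layers every
neuron of layer \<open>i\<close> beyond the reduced width \<open>nred n L i\<close> stays zero: the extra columns of the
next layer only multiply these zeros, and the radial activation does not see zero padding of its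
argument. Hence \<open>T\<close> and \<open>q2 n L T\<close> compute the same network function, which gives the two loss
identities. For the gradients, moving along a coordinate outside the bottom-left blocks stays
inside \<open>Param_int\<close>, so the partial derivative of the loss there is that of the reduced loss
(top-left block) or zero (remaining entries), while \<open>q1\<close> discards exactly the bottom-left
coordinates.\<close>

lemma nred_le: "nred n L i \<le> n i"
  by (cases i) auto

definition param_index :: "(nat \<Rightarrow> nat) \<Rightarrow> nat \<Rightarrow> nat \<Rightarrow> nat \<Rightarrow> nat \<Rightarrow> bool" where
  "param_index n L i r c \<longleftrightarrow> 1 \<le> i \<and> i \<le> L \<and> r < n i \<and> c < n (i - 1) + 1"

lemma Param_nonzero_imp_index: "A \<in> Param n L \<Longrightarrow> A i r c \<noteq> 0 \<Longrightarrow> param_index n L i r c"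
  by (auto simp: Param_def param_index_def)

lemma param_index_nred: "param_index (nred n L) L i r c \<Longrightarrow> param_index n L i r c"
  using nred_le[of n L i] nred_le[of n L "i - 1"] by (auto simp: param_index_def)

lemma ff_eq_0_beyond_width: "n i \<le> r \<Longrightarrow> ff n h A x i r = 0"
  by (cases i) (auto simp: radial_def)

lemma vnorm_zero_padding:
  assumes "k \<le> k'" "\<And>r. k \<le> r \<Longrightarrow> w r = 0"
  shows "vnorm k' w = vnorm k w"
proof -
  have "(\<Sum>r<k'. (w r)\<^sup>2) = (\<Sum>r<k. (w r)\<^sup>2)"
    using assms by (intro sum.mono_neutral_right) auto
  then show ?thesis
    by (simp add: vnorm_def)
qed

lemma radial_zero_padding:
  assumes "k \<le> k'" "\<And>r. k \<le> r \<Longrightarrow> w r = 0"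
  shows "radial g k' w = radial g k w"
  using vnorm_zero_padding[OF assms] assms unfolding radial_def by (auto simp: fun_eq_iff)

definition truncate_params :: "(nat \<Rightarrow> nat) \<Rightarrow> params \<Rightarrow> params" where
  "truncate_params m A = (\<lambda>i r c. if r < m i \<and> c < 1 + m (i - 1) then A i r c else 0)"

lemma aff_truncate_params:
  assumes "m (i - 1) \<le> n (i - 1)" "m i \<le> n i"
    and "\<And>c. m (i - 1) \<le> c \<Longrightarrow> v c = 0"
    and "\<And>r c. m i \<le> r \<Longrightarrow> c < 1 + m (i - 1) \<Longrightarrow> A i r c = 0"
  shows "aff n A i v = aff m (truncate_params m A) i v"
proof
  fix r
  have "(\<Sum>c<n (i - 1). A i r (Suc c) * v c) = (\<Sum>c<m (i - 1). A i r (Suc c) * v c)"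
    using assms(1,3) by (intro sum.mono_neutral_right) auto
  moreover have "A i r 0 + (\<Sum>c<m (i - 1). A i r (Suc c) * v c) = 0" if "m i \<le> r"
    using assms(4) that by simp
  ultimately show "aff n A i v r = aff m (truncate_params m A) i v r"
    using assms(2) by (auto simp: aff_def truncate_params_def)
qed

lemma ff_truncate_params:
  assumes "m 0 = n 0" and "\<And>i. i \<le> L \<Longrightarrow> m i \<le> n i"
    and "\<And>i r c. 1 \<le> i \<Longrightarrow> i \<le> L \<Longrightarrow> m i \<le> r \<Longrightarrow> c < 1 + m (i - 1) \<Longrightarrow> A i r c = 0"
  shows "i \<le> L \<Longrightarrow> ff n h A x i = ff m h (truncate_params m A) x i"
proof (induction i)
  case 0
  then show ?case using assms(1) by simp
next
  case (Suc i)
  let ?v = "ff m h (truncate_params m A) x i"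
  have "aff n A (Suc i) ?v = aff m (truncate_params m A) (Suc i) ?v"
    using Suc.prems assms(2,3) by (intro aff_truncate_params) (auto simp: ff_eq_0_beyond_width)
  moreover have "radial g (n (Suc i)) (aff m B (Suc i) ?v) = radial g (m (Suc i)) (aff m B (Suc i) ?v)"
    for g B using Suc.prems assms(2) by (intro radial_zero_padding) (auto simp: aff_def)
  ultimately show ?case
    using Suc by simp
qed

lemma loss_truncate_params:
  assumes "m 0 = n 0" and "\<And>i. i \<le> L \<Longrightarrow> m i \<le> n i"
    and "\<And>i r c. 1 \<le> i \<Longrightarrow> i \<le> L \<Longrightarrow> m i \<le> r \<Longrightarrow> c < 1 + m (i - 1) \<Longrightarrow> A i r c = 0"
  shows "loss n L h C data A = loss m L h C data (truncate_params m A)"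
  unfolding loss_def using ff_truncate_params[where m = m and n = n and L = L and A = A, OF assms] by simp

lemma q2_eq_truncate_params: "q2 n L = truncate_params (nred n L)"
  by (simp add: fun_eq_iff q2_def top_left_def truncate_params_def)

lemma loss_Param_int:
  assumes "T \<in> Param_int n L"
  shows "loss n L h C data T = loss_red n L h C data (q2 n L T)"
  unfolding loss_red_def q2_eq_truncate_params
  using assms by (intro loss_truncate_params) (auto simp: nred_le Param_int_def in_block_def)

lemma iota_in_Param_int:
  assumes "B \<in> Param (nred n L) L"
  shows "iota n L B \<in> Param_int n L"
proof -
  have "param_index n L i r c" if "iota n L B i r c \<noteq> 0" for i r c
  proof -
    have "B i r c \<noteq> 0"
      using that by (simp add: iota_def split: if_splits)
    then show ?thesis
      using param_index_nred Param_nonzero_imp_index[OF assms] by blast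
  qed
  then have "iota n L B \<in> Param n L"
    by (auto simp: Param_def param_index_def)
  then show ?thesis
    by (simp add: Param_int_def iota_def top_left_def in_block_def)
qed

lemma q2_iota:
  assumes "B \<in> Param (nred n L) L"
  shows "q2 n L (iota n L B) = B"
proof (intro ext)
  fix i r c
  have "top_left n L i r c" if "B i r c \<noteq> 0"
    using Param_nonzero_imp_index[OF assms that] by (simp add: param_index_def top_left_def)
  then show "q2 n L (iota n L B) i r c = B i r c"
    by (auto simp: q2_def iota_def)
qed

lemma loss_iota: "B \<in> Param (nred n L) L \<Longrightarrow> loss n L h C data (iota n L B) = loss_red n L h C data B"
  using loss_Param_int[OF iota_in_Param_int] q2_iota by metis

definition basis_param :: "nat \<Rightarrow> nat \<Rightarrow> nat \<Rightarrow> real \<Rightarrow> params" where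
  "basis_param i r c t = (\<lambda>i' r' c'. if i' = i \<and> r' = r \<and> c' = c then t else 0)"

lemma sum_eq_single:
  assumes "finite A" "a \<in> A" "\<And>x. x \<in> A \<Longrightarrow> x \<noteq> a \<Longrightarrow> g x = 0"
  shows "sum g A = g a"
  using sum.mono_neutral_right[of A "{a}" g] assms by simp

lemma pinner_basis_param:
  assumes "param_index n L i r c"
  shows "pinner n L G (basis_param i r c t) = G i r c * t"
proof -
  have "pinner n L G (basis_param i r c t)
      = (\<Sum>r'<n i. \<Sum>c'<n (i - 1) + 1. G i r' c' * basis_param i r c t i r' c')"
    unfolding pinner_def using assms
    by (intro sum_eq_single) (auto simp: param_index_def basis_param_def)
  also have "\<dots> = (\<Sum>c'<n (i - 1) + 1. G i r c' * basis_param i r c t i r c')"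
    using assms by (intro sum_eq_single) (auto simp: param_index_def basis_param_def)
  also have "\<dots> = G i r c * t"
    using assms by (subst sum_eq_single[of _ c]) (auto simp: param_index_def basis_param_def)
  finally show ?thesis .
qed

lemma basis_param_in_Param: "param_index n L i r c \<Longrightarrow> basis_param i r c t \<in> Param n L"
  unfolding Param_def basis_param_def param_index_def by auto

lemma pnorm_basis_param: "param_index n L i r c \<Longrightarrow> pnorm n L (basis_param i r c t) = \<bar>t\<bar>"
  unfolding pnorm_def
  using pinner_basis_param[of n L i r c "basis_param i r c t" t] by (simp add: basis_param_def)

lemma has_pgrad_imp_partial_derivative:
  assumes grad: "has_pgrad n L f A G" and idx: "param_index n L i r c"
  shows "((\<lambda>t. f (\<lambda>i' r' c'. A i' r' c' + basis_param i r c t i' r' c')) has_real_derivative G i r c) (at 0)"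
proof -
  define \<phi> where "\<phi> t = f (\<lambda>i' r' c'. A i' r' c' + basis_param i r c t i' r' c')" for t
  have \<phi>0: "\<phi> 0 = f A"
    by (simp add: \<phi>_def basis_param_def)
  have "(\<lambda>t. (\<phi> (0 + t) - \<phi> 0) / t) \<midarrow>0\<rightarrow> G i r c"
  proof (rule LIM_I)
    fix e :: real assume "e > 0"
    then obtain d where "d > 0" and d: "\<forall>D\<in>Param n L. pnorm n L D < d \<longrightarrow>
        \<bar>f (\<lambda>i r c. A i r c + D i r c) - f A - pinner n L G D\<bar> \<le> e / 2 * pnorm n L D"
      using grad unfolding has_pgrad_def by (meson half_gt_zero)
    have "\<bar>(\<phi> t - \<phi> 0) / t - G i r c\<bar> < e" if "t \<noteq> 0" "\<bar>t\<bar> < d" for t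
    proof -
      have "\<bar>\<phi> t - f A - G i r c * t\<bar> \<le> e / 2 * \<bar>t\<bar>"
        unfolding \<phi>_def using d[rule_format, OF basis_param_in_Param[OF idx], of t] that
        by (simp add: pnorm_basis_param[OF idx] pinner_basis_param[OF idx])
      also have "\<dots> < e * \<bar>t\<bar>"
        using \<open>e > 0\<close> \<open>t \<noteq> 0\<close> by simp
      finally have "\<bar>(\<phi> t - f A - G i r c * t) / t\<bar> < e"
        using \<open>t \<noteq> 0\<close> by (simp add: divide_less_eq)
      moreover have "(\<phi> t - f A - G i r c * t) / t = (\<phi> t - \<phi> 0) / t - G i r c"
        using \<open>t \<noteq> 0\<close> by (simp add: \<phi>0 field_simps)
      ultimately show ?thesis
        by simp
    qed
    then show "\<exists>s>0. \<forall>t. t \<noteq> 0 \<and> norm (t - 0) < s \<longrightarrow> norm ((\<phi> (0 + t) - \<phi> 0) / t - G i r c) < e"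
      using \<open>d > 0\<close> by auto
  qed
  then show ?thesis
    unfolding \<phi>_def DERIV_def .
qed

lemma has_pgrad_unique:
  assumes "has_pgrad n L f A G\<^sub>1" "has_pgrad n L f A G\<^sub>2"
  shows "G\<^sub>1 = G\<^sub>2"
proof (intro ext)
  fix i r c
  show "G\<^sub>1 i r c = G\<^sub>2 i r c"
  proof (cases "param_index n L i r c")
    case True
    then show ?thesis
      using assms by (meson DERIV_unique has_pgrad_imp_partial_derivative)
  next
    case False
    then show ?thesis
      using assms Param_nonzero_imp_index unfolding has_pgrad_def by metis
  qed
qed

lemma pgrad_eqI: "has_pgrad n L f A G \<Longrightarrow> pgrad n L f A = G"
  unfolding pgrad_def using has_pgrad_unique by blast

lemma Param_int_add_basis_param:
  assumes "T \<in> Param_int n L" "param_index n L i r c" "\<not> in_block n L i r c"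
  shows "(\<lambda>i' r' c'. T i' r' c' + basis_param i r c t i' r' c') \<in> Param_int n L"
  using assms unfolding Param_int_def Param_def basis_param_def param_index_def by auto

lemma q1_gradient_loss:
  assumes T: "T \<in> Param_int n L"
    and G: "has_pgrad n L (loss n L h C data) T G"
    and G': "has_pgrad (nred n L) L (loss_red n L h C data) (q2 n L T) G'"
  shows "q1 n L G = iota2 n L G'"
proof (intro ext)
  fix i r c
  let ?T = "\<lambda>t i' r' c'. T i' r' c' + basis_param i r c t i' r' c'"
  consider "\<not> param_index n L i r c" | "in_block n L i r c"
    | "param_index n L i r c" "\<not> in_block n L i r c" "top_left n L i r c"
    | "param_index n L i r c" "\<not> in_block n L i r c" "\<not> top_left n L i r c"
    by blast
  then show "q1 n L G i r c = iota2 n L G' i r c"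
  proof cases
    case 1
    then have "G i r c = 0" "G' i r c = 0"
      using G G' Param_nonzero_imp_index param_index_nred unfolding has_pgrad_def by metis+
    then show ?thesis
      by (simp add: q1_def iota2_def)
  next
    case 2
    then show ?thesis
      by (simp add: q1_def iota2_def in_block_def top_left_def)
  next
    case 3
    have "q2 n L (?T t) = (\<lambda>i' r' c'. q2 n L T i' r' c' + basis_param i r c t i' r' c')" for t
      using 3 by (auto simp: fun_eq_iff q2_def basis_param_def)
    then have "loss n L h C data (?T t)
        = loss_red n L h C data (\<lambda>i' r' c'. q2 n L T i' r' c' + basis_param i r c t i' r' c')" for t
      using loss_Param_int[OF Param_int_add_basis_param[OF T 3(1,2)]] by simp
    moreover have "param_index (nred n L) L i r c"
      using 3 by (simp add: param_index_def top_left_def)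
    ultimately have "G i r c = G' i r c"
      using has_pgrad_imp_partial_derivative[OF G 3(1)] has_pgrad_imp_partial_derivative[OF G']
      by (simp add: DERIV_unique)
    then show ?thesis
      using 3 by (simp add: q1_def iota2_def)
  next
    case 4
    have "q2 n L (?T t) = q2 n L T" for t
      using 4 by (auto simp: fun_eq_iff q2_def basis_param_def)
    then have "loss n L h C data (?T t) = loss_red n L h C data (q2 n L T)" for t
      using loss_Param_int[OF Param_int_add_basis_param[OF T 4(1,2)]] by simp
    then have "G i r c = 0"
      using has_pgrad_imp_partial_derivative[OF G 4(1)] by (simp add: DERIV_unique[OF _ DERIV_const])
    then show ?thesis
      using 4 by (simp add: q1_def iota2_def)
  qed
qed

theorem lemma6:
  fixes n :: "nat \<Rightarrow> nat" and L :: nat and h :: "nat \<Rightarrow> real \<Rightarrow> real"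
    and C :: "vec \<Rightarrow> vec \<Rightarrow> real" and data :: "(vec \<times> vec) list"
  assumes "\<forall>i\<in>{1..L}. piecewise_diff (h i)"
    and "\<forall>A\<in>Param n L. pdifferentiable n L (loss n L h C data) A"
    and "\<forall>B\<in>Param (nred n L) L. pdifferentiable (nred n L) L (loss_red n L h C data) B"
  shows "(\<forall>B\<in>Param (nred n L) L. iota n L B = iota1 (iota2 n L B)
            \<and> loss n L h C data (iota n L B) = loss_red n L h C data B)
       \<and> (\<forall>T\<in>Param_int n L. loss n L h C data (iota1 T) = loss_red n L h C data (q2 n L T))
       \<and> (\<forall>T\<in>Param_int n L.
            q1 n L (pgrad n L (loss n L h C data) (iota1 T))
            = iota2 n L (pgrad (nred n L) L (loss_red n L h C data) (q2 n L T)))"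
proof (intro conjI ballI)
  fix B assume "B \<in> Param (nred n L) L"
  then show "loss n L h C data (iota n L B) = loss_red n L h C data B"
    by (rule loss_iota)
  show "iota n L B = iota1 (iota2 n L B)"
    by (simp add: iota_def iota1_def iota2_def)
next
  fix T assume "T \<in> Param_int n L"
  then show "loss n L h C data (iota1 T) = loss_red n L h C data (q2 n L T)"
    by (simp add: iota1_def loss_Param_int)
next
  fix T assume T: "T \<in> Param_int n L"
  then have "T \<in> Param n L" "q2 n L T \<in> Param (nred n L) L"
    by (auto simp: Param_int_def Param_def q2_def top_left_def)
  then obtain G G' where
    "has_pgrad n L (loss n L h C data) T G"
    "has_pgrad (nred n L) L (loss_red n L h C data) (q2 n L T) G'"
    using assms(2,3) unfolding pdifferentiable_def by blast
  then show "q1 n L (pgrad n L (loss n L h C data) (iota1 T))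
      = iota2 n L (pgrad (nred n L) L (loss_red n L h C data) (q2 n L T))"
    using q1_gradient_loss[OF T] by (simp add: iota1_def pgrad_eqI)
qed

end
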